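(* Let $q\ge 1$ and $s \ge 0$ be integers and assume that the polynomials $L_0,\dots,L_q$ defined in the context are linearly independent. For $k=0,\dots,q$ and $m=0,\dots,2^s-1$ define $$e_{k,m}(z) = \frac{1}{\sqrt{(2k+1)2^s}}\, r_q^m(z2^{-s})\, D_q^{-1}(z2^{-s})\, L_k(z2^{-s}), \qquad \tilde e_{k,m}(z) = D_q^{2^s}(z2^{-s})\, e_{k,m}(z),$$ and $\Pi^m = \{\tilde e_{0,m},\dots,\tilde e_{q,m}\}$. Then $$\dim \operatorname{span} \bigcup_{m=0}^{2^s-1}\Pi^m = q\,2^s + 1.$$
   Context: $N_q(z) = \sum_{j=0}^q \frac{(2q-j)!\,q!}{(2q)!\,j!\,(q-j)!} z^j$, $D_q(z) = N_q(-z)$, $r_q = N_q/D_q$ (diagonal Padé approximant of $e^z$). For scalar $z$ (not a zero of $D_q$), let $C_0(z),\dots,C_q(z)$ be the solution of the linear system, with $\tilde C_k = C_k/(2k+1)$, $\tilde C_{q+1}=0$: $\sum_{k=0}^q(-1)^k(2k+1)\tilde C_k = 1$ and, for $j=1,\dots,q$, $-z\tilde C_{j-1} + (4j+2)\tilde C_j + z\tilde C_{j+1} = 0$. These are rational functions of the form $C_k(z) = L_k(z)/D_q(z)$ with $L_k$ polynomials of degree at most $q$, and $\sum_k C_k(z) = r_q(z)$. The functions $\tilde e_{k,m}$ are polynomials of degree at most $q2^s$. *)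

theory Defs
  imports "HOL-Analysis.Analysis" "HOL-Computational_Algebra.Polynomial"
begin

text \<open>Numerator of the diagonal Pade approximant of exp.\<close>
definition padeN :: "nat \<Rightarrow> complex poly" where
  "padeN q = (\<Sum>j\<le>q. monom (of_real ((fact (2*q-j) * fact q) / (fact (2*q) * fact j * fact (q-j)))) j)"

definition padeD :: "nat \<Rightarrow> complex poly" where
  "padeD q = pcompose (padeN q) [:0, -1:]"

definition pade_r :: "nat \<Rightarrow> complex \<Rightarrow> complex" where
  "pade_r q z = poly (padeN q) z / poly (padeD q) z"

text \<open>L is the family of numerator polynomials: for every z that is not a zero of D_q,
  C_k(z) = L_k(z)/D_q(z) solves the linear system of the context.\<close>
definition is_L_family :: "nat \<Rightarrow> (nat \<Rightarrow> complex poly) \<Rightarrow> bool" where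
  "is_L_family q L \<longleftrightarrow> (\<forall>z. poly (padeD q) z \<noteq> 0 \<longrightarrow>
     (let Ct = (\<lambda>k. if k \<le> q then poly (L k) z / poly (padeD q) z / of_nat (2*k+1) else 0)
      in (\<Sum>k\<le>q. (-1)^k * of_nat (2*k+1) * Ct k) = 1 \<and>
         (\<forall>j\<in>{1..q}. - z * Ct (j-1) + of_nat (4*j+2) * Ct j + z * Ct (j+1) = 0)))"

definition e_fun :: "nat \<Rightarrow> nat \<Rightarrow> (nat \<Rightarrow> complex poly) \<Rightarrow> nat \<Rightarrow> nat \<Rightarrow> complex \<Rightarrow> complex" where
  "e_fun q s L k m z = (let w = z / 2^s in
     1 / of_real (sqrt (real (2*k+1) * 2^s)) * pade_r q w ^ m * inverse (poly (padeD q) w) * poly (L k) w)"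

text \<open>tilde e_{k,m}: the polynomial that agrees with D_q^{2^s}(z 2^{-s}) e_{k,m}(z) wherever
  the expression is defined (i.e. D_q(z 2^{-s}) \<noteq> 0).\<close>
definition e_tilde :: "nat \<Rightarrow> nat \<Rightarrow> (nat \<Rightarrow> complex poly) \<Rightarrow> nat \<Rightarrow> nat \<Rightarrow> complex poly" where
  "e_tilde q s L k m = (THE p. \<forall>z. poly (padeD q) (z / 2^s) \<noteq> 0 \<longrightarrow>
      poly p z = poly (padeD q) (z / 2^s) ^ (2^s) * e_fun q s L k m z)"

definition Pi_set :: "nat \<Rightarrow> nat \<Rightarrow> (nat \<Rightarrow> complex poly) \<Rightarrow> nat \<Rightarrow> complex poly set" where
  "Pi_set q s L m = (\<lambda>k. e_tilde q s L k m) ` {0..q}"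

end

theory Submission
  imports Defs "HOL-Computational_Algebra.Polynomial_Factorial"
    "HOL-Computational_Algebra.Field_as_Ring" "HOL-Computational_Algebra.Fundamental_Theorem_Algebra"
begin

(* Up to the nonzero factor 1/sqrt((2k+1) 2^s) and the substitution z -> z/2^s, the polynomial
   tilde e_{k,m} is N^m D^(2^s-1-m) L_k, where N = N_q and D = D_q both have degree q.
   The linear system defining the L_k forces deg L_k <= q, so the q+1 independent L_k span all
   polynomials of degree <= q.  N and D are coprime: the three-term recurrence
   N_{p+2} = N_{p+1} + z^2 N_p / (4(2p+1)(2p+3)) makes N_{p+1}(z) N_p(-z) - N_p(z) N_{p+1}(-z)
   a nonzero multiple of z^(2p+1), while N(0) = 1.  With Bezout's identity, every polynomial of
   degree <= q(n+1) is then a sum of N^m D^(n-m) p_m over m <= n with deg p_m <= q.  For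
   n = 2^s - 1 this shows that the tilde e_{k,m} span exactly the polynomials of degree <= q 2^s,
   a space of dimension q 2^s + 1. *)

lemma coprime_if_no_common_root:
  fixes p r :: "'a::{alg_closed_field,field_gcd} poly"
  assumes "p \<noteq> 0" and "\<And>z. poly p z = 0 \<Longrightarrow> poly r z \<noteq> 0"
  shows "coprime p r"
proof (rule ccontr)
  assume "\<not> coprime p r"
  then have "\<not> is_unit (gcd p r)"
    using is_unit_gcd by blast
  moreover have "gcd p r \<noteq> 0"
    using assms(1) by simp
  ultimately have "degree (gcd p r) > 0"
    using is_unit_iff_degree by blast
  then obtain z where "poly (gcd p r) z = 0"
    using alg_closed_imp_poly_has_root by blast
  then have "poly p z = 0" "poly r z = 0"
    by (metis dvdE gcd_dvd1 gcd_dvd2 mult_eq_0_iff poly_mult)+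
  with assms(2) show False
    by blast
qed

lemma poly_eq_0_if_vanishes_off_roots:
  fixes p d :: "'a::{idom,ring_char_0} poly"
  assumes "d \<noteq> 0" and "\<And>z. poly d z \<noteq> 0 \<Longrightarrow> poly p z = 0"
  shows "p = 0"
proof -
  have "poly (p * d) = poly 0"
    using assms(2) by fastforce
  then show ?thesis
    using assms(1) by (simp add: poly_eq_poly_eq_iff)
qed

lemma coprime_power_decomposition:
  fixes N D f :: "'a::field_gcd poly"
  assumes "coprime N D" and "D \<noteq> 0" and "degree N \<le> degree D"
    and "degree f \<le> degree D * Suc n"
  shows "\<exists>p. (\<forall>m\<le>n. degree (p m) \<le> degree D) \<and> f = (\<Sum>m\<le>n. N^m * D^(n-m) * p m)"
  using assms(4)
proof (induction n arbitrary: f)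
  case 0
  then show ?case
    by (intro exI[of _ "\<lambda>_. f"]) simp
next
  case (Suc n)
  define d where "d = degree D"
  obtain x y where xy: "x * D + y * N^(Suc n) = 1"
    using bezout_coefficients_fst_snd[of D "N^(Suc n)"] assms(1)
    by (metis coprime_commute coprime_imp_gcd_eq_1 coprime_power_right_iff)
  define b where "b = (y * f) mod D"
  define a where "a = x * f + ((y * f) div D) * N^(Suc n)"
  have f: "f = D * a + N^(Suc n) * b"
  proof -
    have "f = (x * D + y * N^(Suc n)) * f"
      using xy by simp
    also have "\<dots> = D * (x * f) + N^(Suc n) * ((y * f) div D * D + b)"
      unfolding b_def by (simp add: algebra_simps)
    finally show ?thesis
      unfolding a_def by (simp add: algebra_simps)
  qed
  have "degree b \<le> d"
    using degree_mod_less[OF assms(2), of "y * f"] unfolding b_def d_def by fastforce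
  then have "degree (N^(Suc n) * b) \<le> d * Suc (Suc n)"
    using degree_mult_le[of "N^(Suc n)" b] degree_power_le[of N "Suc n"]
      mult_le_mono2[OF assms(3)[folded d_def], of "Suc n"]
    by (simp add: algebra_simps)
  then have "degree (D * a) \<le> d * Suc (Suc n)"
    using degree_diff_le[OF Suc.prems[folded d_def]] f
    by (metis add_diff_cancel_right')
  then have "degree a \<le> d * Suc n"
    using assms(2) degree_mult_eq[of D a] unfolding d_def by (cases "a = 0") auto
  then obtain p where p: "\<forall>m\<le>n. degree (p m) \<le> d" "a = (\<Sum>m\<le>n. N^m * D^(n-m) * p m)"
    using Suc.IH unfolding d_def by blast
  have "D * a = (\<Sum>m\<le>n. N^m * D^(Suc n - m) * p m)"
    unfolding p(2) sum_distrib_left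
    by (intro sum.cong refl) (simp add: Suc_diff_le algebra_simps)
  then have "f = (\<Sum>m\<le>Suc n. N^m * D^(Suc n - m) * (p(Suc n := b)) m)"
    using f by simp
  moreover have "\<forall>m\<le>Suc n. degree ((p(Suc n := b)) m) \<le> d"
    using p(1) \<open>degree b \<le> d\<close> by (simp add: le_Suc_eq)
  ultimately show ?case
    unfolding d_def by blast
qed

context vector_space
begin

lemma subset_span_if_independent_card_ge:
  assumes "finite W" and "independent B" and "B \<subseteq> span W" and "card W \<le> card B"
  shows "W \<subseteq> span B"
proof
  fix w
  assume "w \<in> W"
  show "w \<in> span B"
  proof (rule ccontr)
    assume "w \<notin> span B"
    then have "independent (insert w B)" and "w \<notin> B"
      using independent_insertI[OF _ assms(2)] span_base by auto
    moreover have "insert w B \<subseteq> span W"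
      using assms(3) \<open>w \<in> W\<close> span_base by blast
    ultimately have "card (insert w B) \<le> card W"
      using independent_span_bound[OF assms(1)] by blast
    moreover have "finite B"
      using independent_span_bound[OF assms(1-3)] by blast
    ultimately show False
      using \<open>w \<notin> B\<close> assms(4) by simp
  qed
qed

end

interpretation poly_vs: vector_space "smult :: 'a::field \<Rightarrow> 'a poly \<Rightarrow> 'a poly"
  by unfold_locales (simp_all add: smult_add_right smult_add_left)

definition polys_upto :: "nat \<Rightarrow> 'a::zero poly set" where
  "polys_upto n = {p. degree p \<le> n}"

lemma subspace_polys_upto: "poly_vs.subspace (polys_upto n :: 'a::field poly set)"
  unfolding poly_vs.subspace_def polys_upto_def
  by (auto intro: order_trans[OF degree_add_le] order_trans[OF degree_smult_le])

lemma polys_upto_subset_span_monoms: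
  "polys_upto n \<subseteq> poly_vs.span ((\<lambda>i. monom (1::'a::field) i) ` {..n})"
proof
  fix p :: "'a poly"
  assume "p \<in> polys_upto n"
  have "p = (\<Sum>i\<le>degree p. smult (coeff p i) (monom 1 i))"
    by (simp add: smult_monom poly_as_sum_of_monoms)
  also have "\<dots> \<in> poly_vs.span ((\<lambda>i. monom 1 i) ` {..n})"
    using \<open>p \<in> polys_upto n\<close> unfolding polys_upto_def
    by (intro poly_vs.span_sum poly_vs.span_scale poly_vs.span_base) auto
  finally show "p \<in> poly_vs.span ((\<lambda>i. monom 1 i) ` {..n})" .
qed

lemma independent_monoms: "poly_vs.independent ((\<lambda>i. monom (1::'a::field) i) ` I)"
  unfolding poly_vs.independent_explicit_module
proof (intro allI impI)
  fix T :: "'a poly set" and u :: "'a poly \<Rightarrow> 'a" and v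
  assume T: "finite T" "T \<subseteq> (\<lambda>i. monom 1 i) ` I" "(\<Sum>v\<in>T. smult (u v) v) = 0" and "v \<in> T"
  then obtain i where v: "v = monom 1 i"
    by auto
  have "coeff w i = 0" if "w \<in> T - {v}" for w
    using that T(2) v by auto
  then have "0 = u v * coeff v i + (\<Sum>w\<in>T-{v}. u w * coeff w i)"
    using arg_cong[OF T(3), of "\<lambda>p. coeff p i"] T(1) \<open>v \<in> T\<close>
    by (simp add: coeff_sum sum.remove)
  then show "u v = 0"
    using \<open>\<And>w. w \<in> T - {v} \<Longrightarrow> coeff w i = 0\<close> v by simp
qed

lemma card_monoms: "card ((\<lambda>i. monom (1::'a::field) i) ` {..n}) = Suc n"
proof -
  have "inj_on (\<lambda>i. monom (1::'a) i) {..n}"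
    by (rule inj_onI) (simp add: monom_eq_iff')
  then show ?thesis
    by (simp add: card_image)
qed

lemma dim_polys_upto: "poly_vs.dim (polys_upto n :: 'a::field poly set) = Suc n"
  by (rule poly_vs.dim_unique[OF _ polys_upto_subset_span_monoms independent_monoms card_monoms])
     (auto simp: polys_upto_def degree_monom_eq)

section \<open>Diagonal Pade polynomials\<close>

definition pade_coeff :: "nat \<Rightarrow> nat \<Rightarrow> real" where
  "pade_coeff q j = (fact (2*q-j) * fact q) / (fact (2*q) * fact j * fact (q-j))"

lemma coeff_padeN: "coeff (padeN q) j = (if j \<le> q then of_real (pade_coeff q j) else 0)"
  by (simp add: padeN_def coeff_sum pade_coeff_def)

lemma pade_coeff_0 [simp]: "pade_coeff q 0 = 1"
  by (simp add: pade_coeff_def)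

lemma pade_coeff_Suc_1: "pade_coeff (Suc q) 1 = 1/2"
proof -
  have "fact (2 * Suc q) = (2 * real q + 2) * (fact (Suc (2*q)) :: real)"
    "fact (Suc q) = (real q + 1) * (fact q :: real)"
    by (simp_all add: algebra_simps)
  then show ?thesis by (simp add: pade_coeff_def divide_simps del: fact_Suc)
qed

lemma pade_coeff_step:
  "pade_coeff (i+k+3) (i+2)
     = pade_coeff (i+k+2) (i+2) + pade_coeff (i+k+1) i / real (4*(2*(i+k+1)+1)*(2*(i+k+1)+3))"
proof -
  \<comment> \<open>With the factorials replaced by opaque reals the simplifier cannot re-expand them,
    and what remains is a rational identity in x and y.\<close>
  define x y :: real where "x = real i" and "y = real k"
  define A B C I K :: real where "A = fact (i+2*k+2)" and "B = fact (i+k+1)"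
    and "C = fact (2*i+2*k+2)" and "I = fact i" and "K = fact k"
  have n: "2*(i+k+3) = 2*i+2*k+6" "2*(i+k+2) = 2*i+2*k+4" "2*(i+k+1) = 2*i+2*k+2"
    "2*i+2*k+6 - (i+2) = i+2*k+4" "2*i+2*k+4 - (i+2) = i+2*k+2" "2*i+2*k+2 - i = i+2*k+2"
    "i+k+3-(i+2) = k+1" "i+k+2-(i+2) = k" "i+k+1-i = k+1"
    by auto
  have f: "fact (i+2*k+4) = (x+2*y+4) * (x+2*y+3) * A"
    "fact (i+2*k+2) = A" "fact (i+k+1) = B" "fact (2*i+2*k+2) = C" "fact i = I" "fact k = K"
    "fact (i+k+3) = (x+y+3) * (x+y+2) * B"
    "fact (i+k+2) = (x+y+2) * B"
    "fact (2*i+2*k+6) = (2*x+2*y+6) * (2*x+2*y+5) * (2*x+2*y+4) * (2*x+2*y+3) * C"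
    "fact (2*i+2*k+4) = (2*x+2*y+4) * (2*x+2*y+3) * C"
    "fact (i+2) = (x+2) * (x+1) * I"
    "fact (k+1) = (y+1) * K"
    "real (4*(2*i+2*k+2+1)*(2*i+2*k+2+3)) = 4*(2*x+2*y+3)*(2*x+2*y+5)"
    unfolding x_def y_def A_def B_def C_def I_def K_def
    by (simp_all add: fact_Suc numeral_eq_Suc algebra_simps)
  have "0 < A" "0 < B" "0 < C" "0 < I" "0 < K" "0 \<le> x" "0 \<le> y"
    unfolding x_def y_def A_def B_def C_def I_def K_def by auto
  then have nz: "A \<noteq> 0" "B \<noteq> 0" "C \<noteq> 0" "I \<noteq> 0" "K \<noteq> 0" "(4::real) \<noteq> 0"
    "x+1 \<noteq> 0" "x+2 \<noteq> 0" "y+1 \<noteq> 0" "x+y+2 \<noteq> 0" "2*x+2*y+3 \<noteq> 0" "2*x+2*y+4 \<noteq> 0"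
    "2*x+2*y+5 \<noteq> 0" "2*x+2*y+6 \<noteq> 0"
    by linarith+
  show ?thesis
    unfolding pade_coeff_def n f divide_divide_eq_left
    apply (subst add_frac_eq, (simp only: mult_eq_0_iff nz simp_thms)+)
    apply (subst frac_eq_eq, (simp only: mult_eq_0_iff nz simp_thms)+)
    by algebra
qed

lemma pade_coeff_top: "pade_coeff (p+2) (p+2) = pade_coeff p p / real (4*(2*p+1)*(2*p+3))"
proof -
  define x P Q :: real where "x = real p" and "P = fact p" and "Q = fact (2*p)"
  have n: "2*(p+2) = 2*p+4" "2*p+4 - (p+2) = p+2" "p+2-(p+2) = 0" "2*p-p = p" "p-p = 0"
    by auto
  have f: "fact (p+2) = (x+2) * (x+1) * P" "fact (2*p+4) = (2*x+4) * (2*x+3) * (2*x+2) * (2*x+1) * Q"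
    "fact p = P" "fact (2*p) = Q" "real (4*(2*p+1)*(2*p+3)) = 4*(2*x+1)*(2*x+3)"
    unfolding x_def P_def Q_def by (simp_all add: fact_Suc numeral_eq_Suc algebra_simps)
  have "0 < P" "0 < Q" "0 \<le> x"
    unfolding x_def P_def Q_def by auto
  then have nz: "P \<noteq> 0" "Q \<noteq> 0" "(4::real) \<noteq> 0" "x+1 \<noteq> 0" "x+2 \<noteq> 0" "2*x+1 \<noteq> 0"
    "2*x+2 \<noteq> 0" "2*x+3 \<noteq> 0" "2*x+4 \<noteq> 0"
    by linarith+
  show ?thesis
    unfolding pade_coeff_def n f fact_0 mult_1_right divide_divide_eq_left
    apply (subst frac_eq_eq, (simp only: mult_eq_0_iff nz simp_thms)+)
    by algebra
qed

lemma pade_coeff_recurrence: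
  assumes "j \<le> p + 2"
  shows "pade_coeff (p+2) j = (if j \<le> p+1 then pade_coeff (p+1) j else 0)
           + (if 2 \<le> j then pade_coeff p (j-2) else 0) / real (4*(2*p+1)*(2*p+3))"
proof -
  consider "j = 0" | "j = 1" | "2 \<le> j" "j \<le> p+1" | "j = p+2"
    using assms by linarith
  then show ?thesis
  proof cases
    case 1
    then show ?thesis by simp
  next
    case 2
    then show ?thesis using pade_coeff_Suc_1[of "Suc p"] pade_coeff_Suc_1[of p] by simp
  next
    case 3
    define i k where "i = j - 2" and "k = p + 1 - j"
    have j: "j = i + 2" and p: "p = i + k + 1"
      using 3 unfolding i_def k_def by linarith+
    have "i+k+1+2 = i+k+3" "i+k+1+1 = i+k+2" "i+2-2 = i" "i+2 \<le> i+k+1+1" "2 \<le> i+2"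
      by simp_all
    then show ?thesis
      using pade_coeff_step[of i k] unfolding j p by (simp only: if_True)
  next
    case 4
    then show ?thesis using pade_coeff_top[of p] by simp
  qed
qed

lemma degree_padeN: "degree (padeN q) = q"
proof (rule antisym)
  show "degree (padeN q) \<le> q"
    by (rule degree_le) (simp add: coeff_padeN)
  show "q \<le> degree (padeN q)"
    by (rule le_degree) (simp add: coeff_padeN pade_coeff_def)
qed

lemma poly_padeD: "poly (padeD q) z = poly (padeN q) (-z)"
  by (simp add: padeD_def poly_pcompose)

lemma degree_padeD: "degree (padeD q) = q"
  by (simp add: padeD_def degree_pcompose degree_padeN)

lemma poly_padeN_0 [simp]: "poly (padeN q) 0 = 1"
  by (simp add: poly_0_coeff_0 coeff_padeN)

lemma padeD_nonzero: "padeD q \<noteq> 0"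
  using poly_padeD[of q 0] by auto

lemma padeN_recurrence:
  "padeN (p+2) = padeN (p+1) + smult (1 / of_nat (4*(2*p+1)*(2*p+3))) (monom 1 2 * padeN p)"
proof (rule poly_eqI)
  fix j
  show "coeff (padeN (p+2)) j
          = coeff (padeN (p+1) + smult (1 / of_nat (4*(2*p+1)*(2*p+3))) (monom 1 2 * padeN p)) j"
  proof (cases "j \<le> p + 2")
    case True
    then show ?thesis
      using arg_cong[OF pade_coeff_recurrence[OF True], of complex_of_real]
      by (auto simp: coeff_padeN coeff_monom_mult)
  qed (simp add: coeff_padeN coeff_monom_mult)
qed

lemma padeN_wronskian:
  "\<exists>c. c \<noteq> 0 \<and> (\<forall>z. poly (padeN (p+1)) z * poly (padeN p) (-z)
                       - poly (padeN p) z * poly (padeN (p+1)) (-z) = c * z^(2*p+1))"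
proof (induction p)
  case 0
  have "padeN 1 = [:1, 1/2:]"
    by (rule poly_eqI)
       (auto simp: coeff_padeN coeff_pCons pade_coeff_Suc_1[of 0, unfolded One_nat_def]
             split: nat.split)
  then show ?case
    by (intro exI[of _ 1]) (simp add: padeN_def)
next
  case (Suc p)
  then obtain c where c: "c \<noteq> 0"
    "\<And>z. poly (padeN (p+1)) z * poly (padeN p) (-z) - poly (padeN p) z * poly (padeN (p+1)) (-z)
           = c * z^(2*p+1)"
    by blast
  define g :: complex where "g = 1 / of_nat (4*(2*p+1)*(2*p+3))"
  have "g \<noteq> 0"
    unfolding g_def divide_eq_0_iff of_nat_eq_0_iff by simp
  have rec: "poly (padeN (p+2)) z = poly (padeN (p+1)) z + g * z^2 * poly (padeN p) z" for z
    by (subst padeN_recurrence) (simp add: g_def poly_monom)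
  show ?case
  proof (intro exI conjI allI)
    show "- g * c \<noteq> 0"
      using \<open>g \<noteq> 0\<close> c(1) by simp
    fix z :: complex
    have "poly (padeN (Suc p + 1)) z * poly (padeN (Suc p)) (-z)
            - poly (padeN (Suc p)) z * poly (padeN (Suc p + 1)) (-z)
          = - g * z^2 * (poly (padeN (p+1)) z * poly (padeN p) (-z)
                         - poly (padeN p) z * poly (padeN (p+1)) (-z))"
      using rec[of z] rec[of "-z"] by (simp add: algebra_simps)
    also have "\<dots> = - g * c * z^(2 * Suc p + 1)"
      unfolding c(2) by (simp add: power_add power2_eq_square)
    finally show "poly (padeN (Suc p + 1)) z * poly (padeN (Suc p)) (-z)
        - poly (padeN (Suc p)) z * poly (padeN (Suc p + 1)) (-z) = - g * c * z^(2 * Suc p + 1)" .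
  qed
qed

lemma coprime_padeN_padeD:
  assumes "q \<ge> 1"
  shows "coprime (padeN q) (padeD q)"
proof (rule coprime_if_no_common_root)
  show "padeN q \<noteq> 0"
    using poly_padeN_0[of q] by (metis poly_0 zero_neq_one)
  fix z
  assume N: "poly (padeN q) z = 0"
  obtain p where q: "q = p + 1"
    using assms by (metis add.commute le_Suc_ex)
  obtain c where "c \<noteq> 0" and "poly (padeN (p+1)) z * poly (padeN p) (-z)
      - poly (padeN p) z * poly (padeN (p+1)) (-z) = c * z^(2*p+1)"
    using padeN_wronskian by blast
  moreover have "z \<noteq> 0"
    using N by auto
  ultimately show "poly (padeD q) z \<noteq> 0"
    using N unfolding q poly_padeD by auto
qed

section \<open>The numerator polynomials L_k\<close>

(* Ltilde q L k = L_k/(2k+1) is the numerator over D_q of tilde C_k = C_k/(2k+1); it is 0 for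
   k > q, matching tilde C_(q+1) = 0. *)
definition Ltilde :: "nat \<Rightarrow> (nat \<Rightarrow> complex poly) \<Rightarrow> nat \<Rightarrow> complex poly" where
  "Ltilde q L k = (if k \<le> q then smult (1 / of_nat (2*k+1)) (L k) else 0)"

lemma poly_Ltilde_div_padeD:
  "poly (Ltilde q L k) z / poly (padeD q) z
     = (if k \<le> q then poly (L k) z / poly (padeD q) z / of_nat (2*k+1) else 0)"
  by (simp add: Ltilde_def)

lemma L_family_normalization:
  assumes "is_L_family q L"
  shows "(\<Sum>k\<le>q. smult ((-1)^k * of_nat (2*k+1)) (Ltilde q L k)) = padeD q"
proof -
  have "(\<Sum>k\<le>q. smult ((-1)^k * of_nat (2*k+1)) (Ltilde q L k)) - padeD q = 0"
  proof (rule poly_eq_0_if_vanishes_off_roots[OF padeD_nonzero])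
    fix z
    assume z: "poly (padeD q) z \<noteq> 0"
    have "(\<Sum>k\<le>q. (-1)^k * of_nat (2*k+1) * (poly (Ltilde q L k) z / poly (padeD q) z)) = 1"
      using assms z unfolding is_L_family_def Let_def poly_Ltilde_div_padeD by auto
    then have "(\<Sum>k\<le>q. (-1)^k * of_nat (2*k+1) * poly (Ltilde q L k) z) = poly (padeD q) z"
      using z by (simp add: sum_divide_distrib[symmetric] divide_eq_eq)
    then show "poly ((\<Sum>k\<le>q. smult ((-1)^k * of_nat (2*k+1)) (Ltilde q L k)) - padeD q) z = 0"
      by (simp add: poly_sum)
  qed
  then show ?thesis
    by simp
qed

lemma L_family_recurrence:
  assumes "is_L_family q L" and "1 \<le> j" "j \<le> q"
  shows "monom 1 1 * Ltilde q L (j-1)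
           = smult (of_nat (4*j+2)) (Ltilde q L j) + monom 1 1 * Ltilde q L (j+1)"
proof -
  have "smult (of_nat (4*j+2)) (Ltilde q L j) + monom 1 1 * Ltilde q L (j+1)
          - monom 1 1 * Ltilde q L (j-1) = 0"
  proof (rule poly_eq_0_if_vanishes_off_roots[OF padeD_nonzero])
    fix z
    assume z: "poly (padeD q) z \<noteq> 0"
    have "- z * (poly (Ltilde q L (j-1)) z / poly (padeD q) z)
          + of_nat (4*j+2) * (poly (Ltilde q L j) z / poly (padeD q) z)
          + z * (poly (Ltilde q L (j+1)) z / poly (padeD q) z) = 0"
      using assms z unfolding is_L_family_def Let_def poly_Ltilde_div_padeD by auto
    then have "- z * poly (Ltilde q L (j-1)) z + of_nat (4*j+2) * poly (Ltilde q L j) z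
                 + z * poly (Ltilde q L (j+1)) z = 0"
      using z by (simp add: field_simps)
    then show "poly (smult (of_nat (4*j+2)) (Ltilde q L j) + monom 1 1 * Ltilde q L (j+1)
                 - monom 1 1 * Ltilde q L (j-1)) z = 0"
      by (simp add: poly_monom algebra_simps)
  qed
  then show ?thesis
    by simp
qed

fun Ltilde_cofactor :: "nat \<Rightarrow> nat \<Rightarrow> complex poly" where
  "Ltilde_cofactor q 0 = 1"
| "Ltilde_cofactor q (Suc 0) = [:of_nat (4*q+2):]"
| "Ltilde_cofactor q (Suc (Suc i)) =
     smult (of_nat (4*(q-i-1)+2)) (Ltilde_cofactor q (Suc i)) + monom 1 2 * Ltilde_cofactor q i"

lemma monom_mult_Ltilde:
  assumes "is_L_family q L" and "i \<le> q"
  shows "monom 1 i * Ltilde q L (q-i) = Ltilde_cofactor q i * Ltilde q L q"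
  using assms
proof (induction q i rule: Ltilde_cofactor.induct)
  case (1 q)
  then show ?case by simp
next
  case (2 q)
  have "monom 1 1 * Ltilde q L (q-1)
          = smult (of_nat (4*q+2)) (Ltilde q L q) + monom 1 1 * Ltilde q L (q+1)"
    by (rule L_family_recurrence[OF 2(1) _ order.refl]) (use 2(2) in simp)
  moreover have "Ltilde q L (q+1) = 0"
    by (simp add: Ltilde_def)
  ultimately show ?case
    by simp
next
  case (3 q i)
  define j where "j = q - Suc i"
  have j: "1 \<le> j" "j \<le> q" "j - 1 = q - Suc (Suc i)" "j + 1 = q - i"
    using "3.prems"(2) unfolding j_def by auto
  have "monom 1 (Suc (Suc i)) * Ltilde q L (q - Suc (Suc i))
          = monom 1 (Suc i) * (monom 1 1 * Ltilde q L (j-1))"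
    unfolding j(3) by (simp add: mult_monom mult.assoc[symmetric])
  also have "\<dots> = monom 1 (Suc i) * (smult (of_nat (4*j+2)) (Ltilde q L j)
                                       + monom 1 1 * Ltilde q L (j+1))"
    by (simp only: L_family_recurrence[OF "3.prems"(1) j(1,2)])
  also have "\<dots> = smult (of_nat (4*j+2)) (monom 1 (Suc i) * Ltilde q L j)
                  + monom 1 2 * (monom 1 i * Ltilde q L (j+1))"
    by (simp add: distrib_left mult_smult_right mult_monom flip: mult.assoc)
  also have "\<dots> = Ltilde_cofactor q (Suc (Suc i)) * Ltilde q L q"
    using "3.IH" "3.prems" unfolding j(4) by (simp add: j_def algebra_simps)
  finally show ?case .
qed

lemma degree_Ltilde_cofactor: "degree (Ltilde_cofactor q i) \<le> i"
proof (induction q i rule: Ltilde_cofactor.induct)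
  case (3 q i)
  have "degree (monom (1::complex) 2 * Ltilde_cofactor q i) \<le> Suc (Suc i)"
    using degree_mult_le[of "monom 1 2" "Ltilde_cofactor q i"] degree_monom_le[of "1::complex" 2] 3(2)
    by linarith
  moreover have "degree (smult (of_nat (4*(q-i-1)+2)) (Ltilde_cofactor q (Suc i))) \<le> Suc (Suc i)"
    using 3(1) degree_smult_le le_SucI order_trans by blast
  ultimately show ?case
    by (simp add: degree_add_le)
qed simp_all

lemma coeff_Ltilde_cofactor: "coeff (Ltilde_cofactor q i) i = (if even i then 1 else 0)"
proof (induction q i rule: Ltilde_cofactor.induct)
  case (3 q i)
  have "coeff (Ltilde_cofactor q (Suc i)) (Suc (Suc i)) = 0"
    using degree_Ltilde_cofactor[of q "Suc i"] by (simp add: coeff_eq_0)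
  with 3(2) show ?case
    by (simp add: coeff_monom_mult)
qed simp_all

definition padeD_cofactor :: "nat \<Rightarrow> complex poly" where
  "padeD_cofactor q = (\<Sum>k\<le>q. smult ((-1)^k * of_nat (2*k+1)) (monom 1 k * Ltilde_cofactor q (q-k)))"

lemma monom_mult_padeD:
  assumes "is_L_family q L"
  shows "monom 1 q * padeD q = padeD_cofactor q * Ltilde q L q"
proof -
  have "monom 1 q * Ltilde q L k = monom 1 k * Ltilde_cofactor q (q-k) * Ltilde q L q" if "k \<le> q" for k
  proof -
    have "monom 1 q * Ltilde q L k = monom 1 k * (monom 1 (q-k) * Ltilde q L (q-(q-k)))"
      using that by (simp add: mult_monom flip: mult.assoc)
    then show ?thesis
      using monom_mult_Ltilde[OF assms, of "q-k"] by (simp add: mult.assoc)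
  qed
  then show ?thesis
    unfolding L_family_normalization[OF assms, symmetric] padeD_cofactor_def
    by (simp add: sum_distrib_left sum_distrib_right mult_smult_left mult_smult_right)
qed

lemma degree_padeD_cofactor: "degree (padeD_cofactor q) = q"
proof (rule antisym)
  show "degree (padeD_cofactor q) \<le> q"
    unfolding padeD_cofactor_def
  proof (rule degree_sum_le)
    fix k
    assume "k \<in> {..q}"
    then have "degree (monom (1::complex) k * Ltilde_cofactor q (q-k)) \<le> q"
      using degree_mult_le[of "monom 1 k" "Ltilde_cofactor q (q-k)"]
        degree_monom_le[of "1::complex" k] degree_Ltilde_cofactor[of q "q-k"]
      by simp
    then show "degree (smult ((-1)^k * of_nat (2*k+1)) (monom 1 k * Ltilde_cofactor q (q-k))) \<le> q"
      using degree_smult_le order_trans by blast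
  qed simp
  define S where "S = (\<Sum>k\<le>q. if even (q-k) then 2*k+1 else 0::nat)"
  have "coeff (padeD_cofactor q) q = (\<Sum>k\<le>q. (-1)^k * of_nat (2*k+1) * (if even (q-k) then 1 else 0))"
    unfolding padeD_cofactor_def coeff_sum
    by (intro sum.cong refl)
       (simp add: coeff_monom_mult coeff_Ltilde_cofactor del: Ltilde_cofactor.simps)
  also have "\<dots> = (-1)^q * of_nat S"
    unfolding S_def of_nat_sum sum_distrib_left
    by (intro sum.cong refl) (auto simp: minus_one_power_iff)
  finally have "coeff (padeD_cofactor q) q = (-1)^q * of_nat S" .
  moreover have "2*q+1 \<le> S"
    unfolding S_def using member_le_sum[of q "{..q}" "\<lambda>k. if even (q-k) then 2*k+1 else 0"] by simp
  ultimately have "coeff (padeD_cofactor q) q \<noteq> 0"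
    by simp
  then show "q \<le> degree (padeD_cofactor q)"
    by (rule le_degree)
qed

(* The hypotheses bound deg L_k only implicitly: comparing degrees in monom_mult_padeD gives
   deg Ltilde_q = q, and monom_mult_Ltilde then bounds the other Ltilde_k. *)
lemma degree_L:
  assumes "is_L_family q L" and "k \<le> q"
  shows "degree (L k) \<le> q"
proof -
  have "(1 / of_nat (2*k+1) :: complex) \<noteq> 0"
    unfolding divide_eq_0_iff of_nat_eq_0_iff by simp
  then have degree_Ltilde: "degree (Ltilde q L k) = degree (L k)"
    using assms(2) unfolding Ltilde_def by (simp only: if_True degree_smult_eq if_False simp_thms)
  show ?thesis
  proof (cases "Ltilde q L q = 0")
    case True
    then show ?thesis
      using monom_mult_Ltilde[OF assms(1), of "q-k"] assms(2) degree_Ltilde by simp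
  next
    case False
    have "padeD_cofactor q \<noteq> 0"
      using degree_padeD_cofactor[of q] degree_padeD[of q] padeD_nonzero[of q]
        monom_mult_padeD[OF assms(1)] by auto
    then have "q + q = q + degree (Ltilde q L q)"
      using arg_cong[OF monom_mult_padeD[OF assms(1)], of degree] False padeD_nonzero[of q]
      by (simp add: degree_mult_eq degree_monom_eq degree_padeD degree_padeD_cofactor)
    then have "degree (Ltilde q L q) = q"
      by simp
    moreover have "degree (monom 1 (q-k) * Ltilde q L k) \<le> (q-k) + degree (Ltilde q L q)"
      using monom_mult_Ltilde[OF assms(1), of "q-k"] assms(2) degree_Ltilde_cofactor[of q "q-k"]
        degree_mult_le[of "Ltilde_cofactor q (q-k)" "Ltilde q L q"] by simp
    ultimately show ?thesis
      using degree_Ltilde by (cases "Ltilde q L k = 0") (auto simp: degree_mult_eq degree_monom_eq)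
  qed
qed

lemma polys_upto_subset_span_L:
  assumes "is_L_family q L" and "inj_on L {0..q}" and "poly_vs.independent (L ` {0..q})"
  shows "polys_upto q \<subseteq> poly_vs.span (L ` {0..q})"
proof -
  let ?W = "(\<lambda>i. monom (1::complex) i) ` {..q}"
  have L_in_span: "L ` {0..q} \<subseteq> poly_vs.span ?W"
  proof
    fix x assume "x \<in> L ` {0..q}"
    then have "x \<in> polys_upto q"
      using degree_L[OF assms(1)] unfolding polys_upto_def by auto
    then show "x \<in> poly_vs.span ?W"
      using polys_upto_subset_span_monoms by blast
  qed
  have "card ?W = card (L ` {0..q})"
    using assms(2) by (simp add: card_monoms card_image)
  then have "?W \<subseteq> poly_vs.span (L ` {0..q})"
    by (intro poly_vs.subset_span_if_independent_card_ge[OF _ assms(3) L_in_span]) simp_all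
  then show ?thesis
    using polys_upto_subset_span_monoms[of q] poly_vs.span_minimal[OF _ poly_vs.subspace_span]
    by blast
qed

section \<open>The polynomials tilde e_{k,m}\<close>

lemma poly_e_tilde_witness:
  assumes "m < 2^s" and "poly (padeD q) (z / 2^s) \<noteq> 0"
  shows "poly (smult (1 / of_real (sqrt (real (2*k+1) * 2^s)))
           (pcompose (padeN q ^ m * padeD q ^ (2^s - 1 - m) * L k) [:0, inverse (2^s):])) z
         = poly (padeD q) (z / 2^s) ^ (2^s) * e_fun q s L k m z"
proof -
  define w where "w = z / 2^s"
  define b :: complex where "b = 1 / of_real (sqrt (real (2*k+1) * 2^s))"
  have Dw: "poly (padeD q) w \<noteq> 0"
    using assms(2) unfolding w_def .
  have "(2::nat)^s = m + (2^s - 1 - m) + 1"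
    using assms(1) by simp
  then have D_power: "poly (padeD q) w ^ (2^s)
      = poly (padeD q) w ^ m * poly (padeD q) w ^ (2^s - 1 - m) * poly (padeD q) w"
    by (metis power_add power_one_right)
  have "poly (smult b (pcompose (padeN q ^ m * padeD q ^ (2^s - 1 - m) * L k) [:0, inverse (2^s):])) z
      = b * (poly (padeN q) w ^ m * poly (padeD q) w ^ (2^s - 1 - m) * poly (L k) w)"
    by (simp add: poly_pcompose divide_inverse w_def)
  also have "\<dots> = poly (padeD q) w ^ (2^s)
      * (b * (poly (padeN q) w / poly (padeD q) w) ^ m * inverse (poly (padeD q) w) * poly (L k) w)"
    unfolding D_power using Dw by (simp add: power_divide field_simps)
  also have "\<dots> = poly (padeD q) (z / 2^s) ^ (2^s) * e_fun q s L k m z"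
    unfolding e_fun_def Let_def pade_r_def w_def b_def by simp
  finally show ?thesis
    unfolding b_def .
qed

lemma e_tilde_eq:
  assumes "m < 2^s"
  shows "e_tilde q s L k m = smult (1 / of_real (sqrt (real (2*k+1) * 2^s)))
           (pcompose (padeN q ^ m * padeD q ^ (2^s - 1 - m) * L k) [:0, inverse (2^s):])"
    (is "_ = ?p")
proof -
  let ?c = "[:0, inverse (2^s):] :: complex poly"
  have "pcompose (padeD q) ?c \<noteq> 0"
    using padeD_nonzero pcompose_eq_0_iff[of ?c "padeD q"] by simp
  have "p' = ?p" if "\<forall>z. poly (padeD q) (z / 2^s) \<noteq> 0 \<longrightarrow>
          poly p' z = poly (padeD q) (z / 2^s) ^ (2^s) * e_fun q s L k m z" for p'
  proof -
    have "p' - ?p = 0"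
    proof (rule poly_eq_0_if_vanishes_off_roots[OF \<open>pcompose (padeD q) ?c \<noteq> 0\<close>])
      fix z
      assume "poly (pcompose (padeD q) ?c) z \<noteq> 0"
      then have "poly (padeD q) (z / 2^s) \<noteq> 0"
        by (simp add: poly_pcompose divide_inverse)
      then show "poly (p' - ?p) z = 0"
        using that poly_e_tilde_witness[OF assms] by simp
    qed
    then show ?thesis
      by simp
  qed
  then show ?thesis
    unfolding e_tilde_def using poly_e_tilde_witness[OF assms] by (intro the_equality) auto
qed

lemma degree_e_tilde:
  assumes "is_L_family q L" and "k \<le> q" and "m < 2^s"
  shows "degree (e_tilde q s L k m) \<le> q * 2^s"
proof -
  have "degree (padeN q ^ m * padeD q ^ (2^s - 1 - m) * L k) \<le> q * m + q * (2^s - 1 - m) + q"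
    using degree_mult_le[of "padeN q ^ m * padeD q ^ (2^s - 1 - m)" "L k"]
      degree_mult_le[of "padeN q ^ m" "padeD q ^ (2^s - 1 - m)"]
      degree_power_le[of "padeN q" m] degree_power_le[of "padeD q" "2^s - 1 - m"]
      degree_L[OF assms(1,2)]
    by (simp add: degree_padeN degree_padeD mult.commute)
  also have "\<dots> = q * (m + (2^s - 1 - m) + 1)"
    by (simp only: distrib_left mult_1_right)
  also have "m + (2^s - 1 - m) + 1 = 2^s"
    using assms(3) by simp
  finally show ?thesis
    unfolding e_tilde_eq[OF assms(3)] using degree_smult_le by (simp add: degree_pcompose)
qed

lemma polys_upto_subset_span_e_tilde:
  assumes "q \<ge> 1" and "is_L_family q L" and "inj_on L {0..q}"
    and "poly_vs.independent (L ` {0..q})"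
  shows "polys_upto (q * 2^s) \<subseteq> poly_vs.span (\<Union>m\<in>{0..<2^s}. Pi_set q s L m)"
proof
  define E where "E = (\<Union>m\<in>{0..<2^s}. Pi_set q s L m)"
  define n :: nat where "n = 2^s - 1"
  have two_power_s: "(2::nat)^s = Suc n"
    unfolding n_def by simp
  let ?c = "[:0, inverse (2^s):] :: complex poly"
  have product_in_span: "pcompose (padeN q ^ m * padeD q ^ (n - m) * r) ?c \<in> poly_vs.span E"
    if "m \<le> n" and "degree r \<le> q" for m r
  proof -
    define V where "V = {r. pcompose (padeN q ^ m * padeD q ^ (n - m) * r) ?c \<in> poly_vs.span E}"
    have "poly_vs.subspace V"
      unfolding poly_vs.subspace_def V_def
      by (auto simp: distrib_left pcompose_add mult_smult_right pcompose_smult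
                     poly_vs.span_zero poly_vs.span_add poly_vs.span_scale)
    moreover have "L k \<in> V" if "k \<le> q" for k
    proof -
      have "m < 2^s" and nm: "n - m = 2^s - 1 - m"
        using \<open>m \<le> n\<close> unfolding two_power_s by simp_all
      define b :: complex where "b = 1 / of_real (sqrt (real (2*k+1) * 2^s))"
      have "b \<noteq> 0"
        unfolding b_def by simp
      have "e_tilde q s L k m \<in> E"
        using \<open>k \<le> q\<close> \<open>m < 2^s\<close> unfolding E_def Pi_set_def
        by (intro UN_I[of m] image_eqI[of _ _ k]) auto
      then have "smult (1 / b) (e_tilde q s L k m) \<in> poly_vs.span E"
        by (intro poly_vs.span_scale poly_vs.span_base)
      moreover have "e_tilde q s L k m
          = smult b (pcompose (padeN q ^ m * padeD q ^ (n - m) * L k) ?c)"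
        unfolding nm b_def by (rule e_tilde_eq[OF \<open>m < 2^s\<close>])
      ultimately show ?thesis
        unfolding V_def using \<open>b \<noteq> 0\<close> by simp
    qed
    ultimately have "poly_vs.span (L ` {0..q}) \<subseteq> V"
      by (intro poly_vs.span_minimal) auto
    then show ?thesis
      using polys_upto_subset_span_L[OF assms(2-4)] \<open>degree r \<le> q\<close>
      unfolding V_def polys_upto_def by blast
  qed
  fix f :: "complex poly"
  assume "f \<in> polys_upto (q * 2^s)"
  have "degree (padeN q) \<le> degree (padeD q)"
    by (simp add: degree_padeN degree_padeD)
  moreover have "degree (pcompose f [:0, 2^s:]) \<le> degree (padeD q) * Suc n"
    using \<open>f \<in> polys_upto (q * 2^s)\<close> unfolding polys_upto_def n_def
    by (simp add: degree_pcompose degree_padeD)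
  ultimately have "\<exists>p. (\<forall>m\<le>n. degree (p m) \<le> degree (padeD q))
      \<and> pcompose f [:0, 2^s:] = (\<Sum>m\<le>n. padeN q ^ m * padeD q ^ (n-m) * p m)"
    by (rule coprime_power_decomposition[OF coprime_padeN_padeD[OF assms(1)] padeD_nonzero])
  then obtain p where p: "\<forall>m\<le>n. degree (p m) \<le> q"
      "pcompose f [:0, 2^s:] = (\<Sum>m\<le>n. padeN q ^ m * padeD q ^ (n-m) * p m)"
    unfolding degree_padeD by blast
  have "pcompose [:0, 2^s:] ?c = [:0, 1:]"
    by (rule poly_eqI) (simp add: pcompose_pCons coeff_pCons split: nat.split)
  then have "f = pcompose (pcompose f [:0, 2^s:]) ?c"
    by (simp flip: pcompose_assoc)
  also have "\<dots> = (\<Sum>m\<le>n. pcompose (padeN q ^ m * padeD q ^ (n-m) * p m) ?c)"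
    unfolding p(2) by (rule pcompose_sum)
  also have "\<dots> \<in> poly_vs.span E"
    using p(1) product_in_span by (intro poly_vs.span_sum) auto
  finally show "f \<in> poly_vs.span (\<Union>m\<in>{0..<2^s}. Pi_set q s L m)"
    unfolding E_def .
qed

theorem proposition4:
  fixes q s :: nat and L :: "nat \<Rightarrow> complex poly"
  assumes "q \<ge> 1"
    and "is_L_family q L"
    and "inj_on L {0..q}"
    and "\<not> module.dependent smult (L ` {0..q})"
  shows "vector_space.dim smult (module.span smult (\<Union>m\<in>{0..<2^s}. Pi_set q s L m))
           = q * 2^s + 1"
proof -
  let ?E = "\<Union>m\<in>{0..<2^s}. Pi_set q s L m"
  have "?E \<subseteq> polys_upto (q * 2^s)"
    using degree_e_tilde[OF assms(2)] unfolding Pi_set_def polys_upto_def by auto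
  then have "poly_vs.span ?E \<subseteq> polys_upto (q * 2^s)"
    by (rule poly_vs.span_minimal[OF _ subspace_polys_upto])
  then have "poly_vs.span ?E = polys_upto (q * 2^s)"
    using polys_upto_subset_span_e_tilde[OF assms] by (rule equalityI)
  then show ?thesis
    by (simp add: dim_polys_upto)
qed

end
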